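(* In the setting below, for all $n\in\mathbb{N}_0$, $$d(t_{2n+2})\le\frac{e^{K(t_{2n+2}-t_{2n+1})}}{2-e^{K(t_{2n+2}-t_{2n+1})}}\,d(t_{2n+1}).$$
   Context: Setting: $N\ge2$; $\psi:\mathbb{R}^d\times\mathbb{R}^d\to\mathbb{R}$ positive, bounded, continuous, $K:=\|\psi\|_\infty$; $\{t_n\}_{n\in\mathbb{N}_0}$ increasing, nonnegative, $t_0=0$, $t_n\to\infty$; $\alpha(0)=1$, $\alpha=1$ on $(t_{2n},t_{2n+1})$, $\alpha=-1$ on $[t_{2n+1},t_{2n+2}]$; $\{x_i\}$ solves $x_i'(t)=\frac1{N-1}\sum_{j\ne i}\alpha(t)\psi(x_i(t),x_j(t))(x_j(t)-x_i(t))$, $t>0$, $x_i(0)=x_i^0\in\mathbb{R}^d$ (continuous, $C^1$ on each $(t_n,t_{n+1})$). $d(t):=\max_{i,j}|x_i(t)-x_j(t)|$. Standing assumptions: $t_{2n+2}-t_{2n+1}<\frac{\ln 2}{K}$ for all $n$; $\sum_{p\ge0}\ln\frac{e^{K(t_{2p+2}-t_{2p+1})}}{2-e^{K(t_{2p+2}-t_{2p+1})}}<\infty$; $\sum_{p\ge0}\ln\max\{1-e^{-K(t_{2p+1}-t_{2p})},1-\frac{\psi_0}{K}(1-e^{-K(t_{2p+1}-t_{2p})})\}=-\infty$, with $\psi_0=\min_{|y|,|z|\le M^0}\psi(y,z)$, $M^0=e^{K\sum_{p}(t_{2p+2}-t_{2p+1})}\max_i|x_i^0|$. *)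

theory Defs
  imports "HOL-Analysis.Analysis"
begin

definition alpha :: "(nat \<Rightarrow> real) \<Rightarrow> real \<Rightarrow> real" where
  "alpha t s = (if \<exists>n. t (2*n+1) \<le> s \<and> s \<le> t (2*n+2) then -1 else 1)"

definition diam :: "nat \<Rightarrow> (nat \<Rightarrow> real \<Rightarrow> 'a::real_normed_vector) \<Rightarrow> real \<Rightarrow> real" where
  "diam N x s = Max {norm (x i s - x j s) | i j. i < N \<and> j < N}"

definition supnorm :: "('a \<Rightarrow> 'a \<Rightarrow> real) \<Rightarrow> real" where
  "supnorm \<psi> = (SUP p. \<bar>\<psi> (fst p) (snd p)\<bar>)"

end

theory Submission
  imports Defs
begin

text \<open>On a backward interval [t(2n+1), t(2n+2)] every pairwise difference x i - x j moves with
  speed at most 2K times the current diameter, since each weight alpha * psi is bounded by K in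
  absolute value. A Gronwall argument for the maximum of finitely many norms then gives
  d(t(2n+2)) \<le> exp(2u) d(t(2n+1)) with u = K (t(2n+2) - t(2n+1)), and
  exp(2u) \<le> exp(u) / (2 - exp(u)) because exp(u) (2 - exp(u)) \<le> 1.\<close>

lemma norm_less_exp_barrier:
  fixes f :: "real \<Rightarrow> 'a::real_normed_vector"
  assumes "a < s" "continuous_on {a..s} f"
    and "\<And>r. a < r \<Longrightarrow> r < s \<Longrightarrow> (f has_vector_derivative f' r) (at r)"
    and "\<And>r. a < r \<Longrightarrow> r < s \<Longrightarrow> norm (f' r) \<le> L * (c * exp (L * (r - a)))"
    and "norm (f a) < c"
  shows "norm (f s) < c * exp (L * (s - a))"
proof -
  define g where "g r = c * exp (L * (r - a))" for r
  have "(g has_vector_derivative L * g r) (at r)" for r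
    unfolding g_def has_real_derivative_iff_has_vector_derivative[symmetric]
    by (auto intro!: derivative_eq_intros)
  moreover have "continuous_on {a..s} g"
    unfolding g_def by (intro continuous_intros)
  moreover have "norm (f' r) \<le> L * g r" if "a < r" "r < s" for r
    using assms(4)[OF that] by (simp add: g_def)
  ultimately have "norm (f s - f a) \<le> g s - g a"
    using assms(1-3) by (intro differentiable_bound_general[where \<phi>' = "\<lambda>r. L * g r"]) auto
  then show ?thesis
    using norm_triangle_ineq2[of "f s" "f a"] \<open>norm (f a) < c\<close> by (simp add: g_def)
qed

lemma Max_norm_less_exp_barrier:
  fixes F :: "'p \<Rightarrow> real \<Rightarrow> 'a::real_normed_vector"
  assumes P: "finite P" "P \<noteq> {}" and "a < b" "0 \<le> L"
    and cont: "\<And>p. p \<in> P \<Longrightarrow> continuous_on {a..b} (F p)"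
    and der: "\<And>p r. p \<in> P \<Longrightarrow> a < r \<Longrightarrow> r < b \<Longrightarrow> (F p has_vector_derivative F' p r) (at r)"
    and bnd: "\<And>p r. p \<in> P \<Longrightarrow> a < r \<Longrightarrow> r < b \<Longrightarrow>
                norm (F' p r) \<le> L * Max ((\<lambda>q. norm (F q r)) ` P)"
    and start: "Max ((\<lambda>q. norm (F q a)) ` P) < c"
  shows "Max ((\<lambda>q. norm (F q b)) ` P) < c * exp (L * (b - a))"
proof -
  define D where "D r = Max ((\<lambda>q. norm (F q r)) ` P)" for r
  define g where "g r = c * exp (L * (r - a))" for r
  have norm_le_D: "norm (F q r) \<le> D r" if "q \<in> P" for q r
    unfolding D_def using P that by (intro Max_ge) auto
  define S where "S = (\<Union>p\<in>P. {r \<in> {a..b}. g r \<le> norm (F p r)})"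
  have "compact S"
  proof -
    have "closed S"
      unfolding S_def g_def using P
      by (intro closed_UN ballI continuous_on_closed_Collect_le continuous_intros cont) auto
    moreover have "S = {a..b} \<inter> S" by (auto simp: S_def)
    ultimately show ?thesis using compact_Int_closed[OF compact_Icc[of a b]] by metis
  qed
  have "S = {}"
  proof (rule ccontr)
    assume "S \<noteq> {}"
    \<comment> \<open>the first time some norm reaches the barrier g\<close>
    with \<open>compact S\<close> obtain s where "s \<in> S" and s_min: "\<And>r. r \<in> S \<Longrightarrow> s \<le> r"
      by (meson compact_attains_inf)
    then obtain p where p: "p \<in> P" "s \<in> {a..b}" "g s \<le> norm (F p s)"
      unfolding S_def by blast
    have "norm (F p a) < c" using norm_le_D[OF p(1), of a] start by (simp add: D_def)
    with p have "s \<noteq> a" by (auto simp: g_def)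
    with p have "a < s" by simp
    have "norm (F p s) < g s"
      unfolding g_def
    proof (rule norm_less_exp_barrier[OF \<open>a < s\<close>])
      show "continuous_on {a..s} (F p)"
        using p by (auto intro: continuous_on_subset[OF cont])
      show "(F p has_vector_derivative F' p r) (at r)" if "a < r" "r < s" for r
        using der p that by auto
      show "norm (F' p r) \<le> L * (c * exp (L * (r - a)))" if "a < r" "r < s" for r
      proof -
        have "r \<notin> S" using s_min that by force
        then have "\<forall>q\<in>P. norm (F q r) < g r" using that p(2) unfolding S_def by force
        then have "D r < g r" unfolding D_def using P by simp
        have "norm (F' p r) \<le> L * D r" using bnd p that by (auto simp: D_def)
        also have "\<dots> \<le> L * g r" using \<open>D r < g r\<close> \<open>0 \<le> L\<close> by (intro mult_left_mono) auto
        finally show ?thesis by (simp add: g_def)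
      qed
    qed fact
    with p show False by simp
  qed
  then have "\<forall>q\<in>P. norm (F q b) < g b" using \<open>a < b\<close> unfolding S_def by force
  then show ?thesis using P by (simp add: g_def)
qed

lemma Max_norm_le_exp_growth:
  fixes F :: "'p \<Rightarrow> real \<Rightarrow> 'a::real_normed_vector"
  assumes "finite P" "P \<noteq> {}" "a < b" "0 \<le> L"
    and "\<And>p. p \<in> P \<Longrightarrow> continuous_on {a..b} (F p)"
    and "\<And>p r. p \<in> P \<Longrightarrow> a < r \<Longrightarrow> r < b \<Longrightarrow> (F p has_vector_derivative F' p r) (at r)"
    and "\<And>p r. p \<in> P \<Longrightarrow> a < r \<Longrightarrow> r < b \<Longrightarrow>
           norm (F' p r) \<le> L * Max ((\<lambda>q. norm (F q r)) ` P)"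
  shows "Max ((\<lambda>q. norm (F q b)) ` P) \<le> exp (L * (b - a)) * Max ((\<lambda>q. norm (F q a)) ` P)"
proof (rule field_le_epsilon)
  fix e :: real
  assume "0 < e"
  then have "Max ((\<lambda>q. norm (F q b)) ` P)
      < (Max ((\<lambda>q. norm (F q a)) ` P) + e / exp (L * (b - a))) * exp (L * (b - a))"
    by (intro Max_norm_less_exp_barrier[OF assms]) auto
  then show "Max ((\<lambda>q. norm (F q b)) ` P) \<le> exp (L * (b - a)) * Max ((\<lambda>q. norm (F q a)) ` P) + e"
    by (simp add: algebra_simps)
qed

lemma norm_scaleR_mean_le:
  fixes f :: "'j \<Rightarrow> 'a::real_normed_vector"
  assumes "finite J" "J \<noteq> {}" "\<And>j. j \<in> J \<Longrightarrow> norm (f j) \<le> C"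
  shows "norm ((1 / real (card J)) *\<^sub>R sum f J) \<le> C"
proof -
  have "norm (sum f J) \<le> (\<Sum>j\<in>J. C)" using assms(3) by (rule sum_norm_le)
  then have "norm (sum f J) \<le> real (card J) * C" by simp
  moreover have "0 < card J" using assms(1,2) by (simp add: card_gt_0_iff)
  ultimately show ?thesis by (simp add: field_simps)
qed

lemma diam_eq_Max_pairs:
  "diam N x s = Max ((\<lambda>q. norm (x (fst q) s - x (snd q) s)) ` ({..<N} \<times> {..<N}))"
  unfolding diam_def by (rule arg_cong[where f = Max]) force

lemma norm_le_diam:
  assumes "i < N" "j < N"
  shows "norm (x i s - x j s) \<le> diam N x s"
  unfolding diam_eq_Max_pairs using assms by (intro Max_ge) (auto intro!: image_eqI[where x = "(i, j)"])

lemma diam_nonneg: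
  assumes "0 < N"
  shows "0 \<le> diam N x s"
  using norm_le_diam[OF assms assms, of x s] by simp

lemma norm_mean_weighted_diff_le_diam:
  fixes x :: "nat \<Rightarrow> real \<Rightarrow> 'a::real_normed_vector"
  assumes "2 \<le> N" "i < N" "\<And>j. \<bar>w j\<bar> \<le> K"
  shows "norm ((1 / real (N - 1)) *\<^sub>R (\<Sum>j\<in>{..<N} - {i}. w j *\<^sub>R (x j s - x i s)))
    \<le> K * diam N x s"
proof -
  have "0 \<le> K" using assms(3)[of 0] by linarith
  have "(if i = 0 then 1 else 0) \<in> {..<N} - {i}" using \<open>2 \<le> N\<close> by auto
  then have "{..<N} - {i} \<noteq> {}" by blast
  moreover have "norm (w j *\<^sub>R (x j s - x i s)) \<le> K * diam N x s" if "j < N" for j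
  proof -
    have "norm (x j s - x i s) \<le> diam N x s" using \<open>j < N\<close> \<open>i < N\<close> by (rule norm_le_diam)
    then show ?thesis using assms(3)[of j] \<open>0 \<le> K\<close> by (auto intro!: mult_mono)
  qed
  ultimately have "norm ((1 / real (card ({..<N} - {i}))) *\<^sub>R
      (\<Sum>j\<in>{..<N} - {i}. w j *\<^sub>R (x j s - x i s))) \<le> K * diam N x s"
    by (intro norm_scaleR_mean_le) auto
  then show ?thesis using \<open>i < N\<close> by simp
qed

lemma diam_le_exp_growth:
  fixes x :: "nat \<Rightarrow> real \<Rightarrow> 'a::real_normed_vector" and c :: "nat \<Rightarrow> nat \<Rightarrow> real \<Rightarrow> real"
  assumes "2 \<le> N" "a < b"
    and cont: "\<And>i. i < N \<Longrightarrow> continuous_on {a..b} (x i)"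
    and ode: "\<And>i s. i < N \<Longrightarrow> a < s \<Longrightarrow> s < b \<Longrightarrow>
        (x i has_vector_derivative
          (1 / real (N - 1)) *\<^sub>R (\<Sum>j\<in>{..<N} - {i}. c i j s *\<^sub>R (x j s - x i s))) (at s)"
    and c_bdd: "\<And>i j s. \<bar>c i j s\<bar> \<le> K"
  shows "diam N x b \<le> exp (2 * K * (b - a)) * diam N x a"
proof -
  define P where "P = {..<N} \<times> {..<N}"
  define v where "v i s = (1 / real (N - 1)) *\<^sub>R (\<Sum>j\<in>{..<N} - {i}. c i j s *\<^sub>R (x j s - x i s))"
    for i s
  have "0 \<le> K" using c_bdd[of 0 0 0] by linarith
  have speed_le_diam: "norm (v i s) \<le> K * diam N x s" if "i < N" for i s
    unfolding v_def using \<open>2 \<le> N\<close> that c_bdd by (rule norm_mean_weighted_diff_le_diam)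
  have "Max ((\<lambda>q. norm (x (fst q) b - x (snd q) b)) ` P)
      \<le> exp (2 * K * (b - a)) * Max ((\<lambda>q. norm (x (fst q) a - x (snd q) a)) ` P)"
  proof (rule Max_norm_le_exp_growth[where F' = "\<lambda>q s. v (fst q) s - v (snd q) s"])
    show "continuous_on {a..b} (\<lambda>s. x (fst p) s - x (snd p) s)" if "p \<in> P" for p
      using that cont by (auto simp: P_def intro!: continuous_on_diff)
    show "((\<lambda>s. x (fst p) s - x (snd p) s) has_vector_derivative v (fst p) r - v (snd p) r) (at r)"
      if "p \<in> P" "a < r" "r < b" for p r
      using that unfolding v_def P_def by (intro has_vector_derivative_diff ode) auto
    show "norm (v (fst p) r - v (snd p) r) \<le> 2 * K * Max ((\<lambda>q. norm (x (fst q) r - x (snd q) r)) ` P)"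
      if "p \<in> P" "a < r" "r < b" for p r
    proof -
      have "norm (v (fst p) r - v (snd p) r) \<le> norm (v (fst p) r) + norm (v (snd p) r)"
        by (rule norm_triangle_ineq4)
      also have "\<dots> \<le> 2 * K * diam N x r"
        using that speed_le_diam[of "fst p" r] speed_le_diam[of "snd p" r] by (auto simp: P_def)
      finally show ?thesis by (simp only: diam_eq_Max_pairs P_def)
    qed
    have "(0, 0) \<in> P" using \<open>2 \<le> N\<close> by (simp add: P_def)
    then show "P \<noteq> {}" by blast
    show "finite P" by (simp add: P_def)
    show "0 \<le> 2 * K" using \<open>0 \<le> K\<close> by simp
  qed fact
  then show ?thesis by (simp only: diam_eq_Max_pairs P_def)
qed

lemma square_le_divide_two_minus:
  fixes y :: real
  assumes "0 < y" "y < 2"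
  shows "y\<^sup>2 \<le> y / (2 - y)"
proof -
  have "y * (2 - y) \<le> 1" using zero_le_power2[of "y - 1"] by (simp add: power2_eq_square algebra_simps)
  then have "y\<^sup>2 * (2 - y) \<le> y" using assms by (simp add: power2_eq_square mult.assoc)
  then show ?thesis using assms by (simp add: field_simps)
qed

lemma abs_le_supnorm:
  assumes "\<exists>B. \<forall>y z. \<bar>\<psi> y z\<bar> \<le> B"
  shows "\<bar>\<psi> y z\<bar> \<le> supnorm \<psi>"
proof -
  obtain B where B: "\<forall>y z. \<bar>\<psi> y z\<bar> \<le> B" using assms by blast
  have "\<bar>\<psi> (fst (y, z)) (snd (y, z))\<bar> \<le> (SUP p. \<bar>\<psi> (fst p) (snd p)\<bar>)"
    by (rule cSUP_upper) (use B in \<open>auto intro!: bdd_aboveI2\<close>)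
  then show ?thesis by (simp add: supnorm_def)
qed

theorem lemma3p12:
  fixes N :: nat and \<psi> :: "'a::euclidean_space \<Rightarrow> 'a \<Rightarrow> real"
    and t :: "nat \<Rightarrow> real" and x :: "nat \<Rightarrow> real \<Rightarrow> 'a"
  assumes N2: "N \<ge> 2"
    and psi_pos: "\<And>y z. \<psi> y z > 0"
    and psi_bdd: "\<exists>B. \<forall>y z. \<bar>\<psi> y z\<bar> \<le> B"
    and psi_cont: "continuous_on UNIV (\<lambda>p. \<psi> (fst p) (snd p))"
    and t_mono: "strict_mono t" and t0: "t 0 = 0"
    and t_lim: "filterlim t at_top sequentially"
    and x_cont: "\<And>i. i < N \<Longrightarrow> continuous_on {0..} (x i)"
    and x_ode: "\<And>i n s. i < N \<Longrightarrow> t n < s \<Longrightarrow> s < t (Suc n) \<Longrightarrow>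
        (x i has_vector_derivative
          ((1 / real (N - 1)) *\<^sub>R
            (\<Sum>j\<in>{..<N} - {i}. (alpha t s * \<psi> (x i s) (x j s)) *\<^sub>R (x j s - x i s))))
        (at s)"
    and A1: "\<And>n. t (2*n+2) - t (2*n+1) < ln 2 / supnorm \<psi>"
    and A2: "summable (\<lambda>p. ln (exp (supnorm \<psi> * (t (2*p+2) - t (2*p+1)))
                 / (2 - exp (supnorm \<psi> * (t (2*p+2) - t (2*p+1))))))"
    and A3: "filterlim (\<lambda>m. \<Sum>p<m. ln (max (1 - exp (- supnorm \<psi> * (t (2*p+1) - t (2*p))))
               (1 - (Inf {\<psi> y z | y z. norm y \<le> exp (supnorm \<psi> * (\<Sum>q. t (2*q+2) - t (2*q+1)))
                                              * Max {norm (x i 0) | i. i < N}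
                                   \<and> norm z \<le> exp (supnorm \<psi> * (\<Sum>q. t (2*q+2) - t (2*q+1)))
                                              * Max {norm (x i 0) | i. i < N}}
                     / supnorm \<psi>) * (1 - exp (- supnorm \<psi> * (t (2*p+1) - t (2*p)))))))
             at_bot sequentially"
  shows "\<forall>n. diam N x (t (2*n+2))
          \<le> exp (supnorm \<psi> * (t (2*n+2) - t (2*n+1)))
             / (2 - exp (supnorm \<psi> * (t (2*n+2) - t (2*n+1)))) * diam N x (t (2*n+1))"
proof
  fix n
  define K where "K = supnorm \<psi>"
  define u where "u = K * (t (2*n+2) - t (2*n+1))"
  have psi_le_K: "\<bar>\<psi> y z\<bar> \<le> K" for y z
    unfolding K_def using psi_bdd by (rule abs_le_supnorm)
  have "0 < K" using psi_le_K[of 0 0] psi_pos[of 0 0] by linarith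
  have "t (2*n+1) < t (2*n+2)" using t_mono by (simp add: strict_mono_less)
  have "0 \<le> t (2*n+1)" using strict_mono_less_eq[OF t_mono, of 0 "2*n+1"] t0 by simp
  have "diam N x (t (2*n+2)) \<le> exp (2 * K * (t (2*n+2) - t (2*n+1))) * diam N x (t (2*n+1))"
  proof (rule diam_le_exp_growth[where c = "\<lambda>i j s. alpha t s * \<psi> (x i s) (x j s)",
        OF N2 \<open>t (2*n+1) < t (2*n+2)\<close>])
    show "continuous_on {t (2*n+1)..t (2*n+2)} (x i)" if "i < N" for i
      using \<open>0 \<le> t (2*n+1)\<close> by (auto intro: continuous_on_subset[OF x_cont[OF that]])
    show "\<bar>alpha t s * \<psi> (x i s) (x j s)\<bar> \<le> K" for i j s
      using psi_le_K by (simp add: alpha_def abs_mult)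
  qed (rule x_ode[where n = "2*n+1"], simp_all)
  also have "\<dots> = (exp u)\<^sup>2 * diam N x (t (2*n+1))"
    by (simp add: u_def power2_eq_square flip: exp_add)
  also have "\<dots> \<le> exp u / (2 - exp u) * diam N x (t (2*n+1))"
  proof (intro mult_right_mono square_le_divide_two_minus)
    have "u < ln 2" using A1[of n] \<open>0 < K\<close> by (simp add: u_def K_def field_simps)
    then show "exp u < 2" by (metis exp_less_cancel_iff exp_ln zero_less_numeral)
    show "0 \<le> diam N x (t (2*n+1))" using N2 by (intro diam_nonneg) simp
  qed simp
  finally show "diam N x (t (2*n+2)) \<le> exp (supnorm \<psi> * (t (2*n+2) - t (2*n+1)))
             / (2 - exp (supnorm \<psi> * (t (2*n+2) - t (2*n+1)))) * diam N x (t (2*n+1))"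
    by (simp only: u_def K_def)
qed

end
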